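(* Assume hypotheses (A) and (B) and that $p_{ij}=p<1/(d-1)$ for all $i\ne j$ in $\{1,\dots,d\}$. Let $q=p/(1-(d-2)p)$ and, for $\gamma\in\mathbb{R}^d$ with all $\gamma_j>0$, $$\Sigma(\gamma_1,\dots,\gamma_d)=\sum_{j=1}^d\frac{\max_{1\le i\le d}\log(1+q\gamma_i)-\log(1+q\gamma_j)}{\log(1+\gamma_j)-\log(1+q\gamma_j)}.$$ Then $\gamma=(\gamma_1,\dots,\gamma_d)\in\Gamma$ if and only if $\gamma_i>0$ for all $i$ and $\Sigma(\gamma_1,\dots,\gamma_d)<1$.
   Context: Jackson network with $d$ queues: arrival rates $\lambda_i\ge0$, service rates $\mu_i>0$, routing matrix $P=(p_{ij})_{i,j=1}^d$ nonnegative with $p_{ii}=0$, $\sum_jp_{ij}\le1$, $p_{i0}=1-\sum_jp_{ij}$. Hypothesis (A): the jump-rate kernel on $\mathbb{Z}^d$ (jumps $+\epsilon^i$ at rate $\lambda_i$, $-\epsilon^i$ at rate $\mu_ip_{i0}$, $\epsilon^j-\epsilon^i$ at rate $\mu_ip_{ij}$) is irreducible (equivalently spectral radius of $P$ $<1$ and for every $i$ some $\lambda_jp^{(n)}_{ji}>0$); then the traffic equations $\nu_j=\lambda_j+\sum_i\nu_ip_{ij}$ have a unique solution with $\nu_i>0$. Hypothesis (B): $\nu_i<\mu_i$ for all $i$. $Q_{ij}$: probability that the chain on $\{0,\dots,d\}$ with transitions $p_{ij}$ ($0$ absorbing) started at $i$ ever visits $j$ (time $0$ included); in the present setting $Q_{ij}=q$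 for $i\ne j$. For $\gamma\in\mathbb{R}_+^d$, $\overrightarrow{\gamma_i}$ has components $\gamma_i^j=\log(1+Q_{ji}\gamma_i)$; $\Gamma$ is the set of $\gamma\in\mathbb{R}_+^d$ such that for every $i$ and nonzero $v\in\mathbb{R}_+^d$ with $v^i=0$, $\overrightarrow{\gamma_i}\cdot v<\max_j\overrightarrow{\gamma_j}\cdot v$. *)

theory Defs
  imports Complex_Main
begin

text \<open>Queues are indexed by 1..d (index 0 is the exterior/absorbing state).
  Vectors in R^d / Z^d are functions on nat, only their values on 1..d matter.\<close>

definition exit_prob :: "nat \<Rightarrow> (nat \<Rightarrow> nat \<Rightarrow> real) \<Rightarrow> nat \<Rightarrow> real" where
  "exit_prob d P i = 1 - (\<Sum>j\<in>{1..d}. P i j)"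

definition jackson_network ::
  "nat \<Rightarrow> (nat \<Rightarrow> real) \<Rightarrow> (nat \<Rightarrow> real) \<Rightarrow> (nat \<Rightarrow> nat \<Rightarrow> real) \<Rightarrow> bool" where
  "jackson_network d lam mu P \<longleftrightarrow>
     (\<forall>i\<in>{1..d}. lam i \<ge> 0 \<and> mu i > 0 \<and> P i i = 0 \<and> (\<Sum>j\<in>{1..d}. P i j) \<le> 1) \<and>
     (\<forall>i\<in>{1..d}. \<forall>j\<in>{1..d}. P i j \<ge> 0)"

definition unit_vec :: "nat \<Rightarrow> nat \<Rightarrow> int" where
  "unit_vec i = (\<lambda>k. if k = i then 1 else 0)"

definition jump ::
  "nat \<Rightarrow> (nat \<Rightarrow> real) \<Rightarrow> (nat \<Rightarrow> real) \<Rightarrow> (nat \<Rightarrow> nat \<Rightarrow> real) \<Rightarrow> (nat \<Rightarrow> int) \<Rightarrow> (nat \<Rightarrow> int) \<Rightarrow> bool" where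
  "jump d lam mu P x y \<longleftrightarrow>
     (\<exists>i\<in>{1..d}.
        (y = (\<lambda>k. x k + unit_vec i k) \<and> lam i > 0) \<or>
        (y = (\<lambda>k. x k - unit_vec i k) \<and> mu i * exit_prob d P i > 0) \<or>
        (\<exists>j\<in>{1..d}. j \<noteq> i \<and> y = (\<lambda>k. x k + unit_vec j k - unit_vec i k) \<and> mu i * P i j > 0))"

definition lattice :: "nat \<Rightarrow> (nat \<Rightarrow> int) set" where
  "lattice d = {x. \<forall>k. k \<notin> {1..d} \<longrightarrow> x k = 0}"

definition hypA ::
  "nat \<Rightarrow> (nat \<Rightarrow> real) \<Rightarrow> (nat \<Rightarrow> real) \<Rightarrow> (nat \<Rightarrow> nat \<Rightarrow> real) \<Rightarrow> bool" where
  "hypA d lam mu P \<longleftrightarrow> (\<forall>x\<in>lattice d. \<forall>y\<in>lattice d. (jump d lam mu P)\<^sup>*\<^sup>* x y)"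

definition traffic_solution ::
  "nat \<Rightarrow> (nat \<Rightarrow> real) \<Rightarrow> (nat \<Rightarrow> nat \<Rightarrow> real) \<Rightarrow> (nat \<Rightarrow> real) \<Rightarrow> bool" where
  "traffic_solution d lam P nu \<longleftrightarrow>
     (\<forall>j\<in>{1..d}. nu j = lam j + (\<Sum>i\<in>{1..d}. nu i * P i j))"

definition hypB ::
  "nat \<Rightarrow> (nat \<Rightarrow> real) \<Rightarrow> (nat \<Rightarrow> real) \<Rightarrow> (nat \<Rightarrow> nat \<Rightarrow> real) \<Rightarrow> bool" where
  "hypB d lam mu P \<longleftrightarrow>
     (\<forall>nu. traffic_solution d lam P nu \<longrightarrow> (\<forall>i\<in>{1..d}. nu i < mu i))"

text \<open>Taboo transition probabilities: taboo_prob d P j n i l is the probability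
  that the chain (transitions P, 0 absorbing) started at i is at l at time n
  without having been at j at times 1..n-1.\<close>
fun taboo_prob :: "nat \<Rightarrow> (nat \<Rightarrow> nat \<Rightarrow> real) \<Rightarrow> nat \<Rightarrow> nat \<Rightarrow> nat \<Rightarrow> nat \<Rightarrow> real" where
  "taboo_prob d P j 0 i l = (if i = l then 1 else 0)"
| "taboo_prob d P j (Suc n) i l = (\<Sum>k\<in>{1..d} - {j}. taboo_prob d P j n i k * P k l)"

text \<open>Q_ij: probability that the chain started at i ever visits j (time 0 included):
  sum over n of the probability that the first visit to j happens at time n.\<close>
definition Qmat :: "nat \<Rightarrow> (nat \<Rightarrow> nat \<Rightarrow> real) \<Rightarrow> nat \<Rightarrow> nat \<Rightarrow> real" where
  "Qmat d P i j = (if i = j then 1 else (\<Sum>n. taboo_prob d P j (Suc n) i j))"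

definition gvec :: "nat \<Rightarrow> (nat \<Rightarrow> nat \<Rightarrow> real) \<Rightarrow> (nat \<Rightarrow> real) \<Rightarrow> nat \<Rightarrow> nat \<Rightarrow> real" where
  "gvec d P gam i = (\<lambda>j. ln (1 + Qmat d P j i * gam i))"

definition dotd :: "nat \<Rightarrow> (nat \<Rightarrow> real) \<Rightarrow> (nat \<Rightarrow> real) \<Rightarrow> real" where
  "dotd d u v = (\<Sum>k\<in>{1..d}. u k * v k)"

definition Gamma_set :: "nat \<Rightarrow> (nat \<Rightarrow> nat \<Rightarrow> real) \<Rightarrow> (nat \<Rightarrow> real) set" where
  "Gamma_set d P = {gam. (\<forall>i\<in>{1..d}. gam i \<ge> 0) \<and>
     (\<forall>i\<in>{1..d}. \<forall>v. (\<forall>k\<in>{1..d}. v k \<ge> 0) \<and> (\<exists>k\<in>{1..d}. v k \<noteq> 0) \<and> v i = 0 \<longrightarrow>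
        dotd d (gvec d P gam i) v < Max ((\<lambda>j. dotd d (gvec d P gam j) v) ` {1..d}))}"

definition Sigma_fun :: "nat \<Rightarrow> real \<Rightarrow> (nat \<Rightarrow> real) \<Rightarrow> real" where
  "Sigma_fun d q gam = (\<Sum>j\<in>{1..d}.
     (Max ((\<lambda>i. ln (1 + q * gam i)) ` {1..d}) - ln (1 + q * gam j)) /
     (ln (1 + gam j) - ln (1 + q * gam j)))"

end

theory Submission
  imports Defs
begin

text \<open>With uniform routing p, the chain started at k \<noteq> i hits i with probability
  q = p / (1 - (d - 2) p): it either jumps to i directly or first wanders among the other
  d - 2 queues. Hence gvec i has the entry b_i = ln (1 + gam_i) at i and a_i = ln (1 + q gam_i)
  elsewhere, so gvec i \<bullet> v = a_i (\<Sum>v) + c_i v_i with c_i = b_i - a_i, and membership in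
  Gamma becomes a statement about such rank-one-plus-diagonal forms. For c > 0 their maximum
  over i is attained only on the support of v exactly when \<Sum>_j (max a - a_j) / c_j < 1:
  testing against v_j = (max a - a_j) / c_j, which vanishes at an argmax of a, shows
  necessity, and summing the inequalities c_j v_j \<le> (max a - a_j) \<Sum>v shows sufficiency.
  If some gam_j = 0, then a_j = c_j = 0 and the unit vector at j is a counterexample.\<close>

context
  fixes d :: nat and P :: "nat \<Rightarrow> nat \<Rightarrow> real" and p :: real
  assumes uniform: "\<forall>i\<in>{1..d}. \<forall>j\<in>{1..d}. i \<noteq> j \<longrightarrow> P i j = p"
    and no_loops: "\<forall>i\<in>{1..d}. P i i = 0"
begin

lemma uniform_routing_sum_avoiding:
  assumes i: "i \<in> {1..d}" and k: "k \<in> {1..d} - {i}"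
  shows "(\<Sum>l\<in>{1..d} - {i}. P k l) = (real d - 2) * p"
proof -
  have "(\<Sum>l\<in>{1..d} - {i}. P k l) = P k k + (\<Sum>l\<in>{1..d} - {i} - {k}. P k l)"
    using k by (subst sum.remove[of _ k]) auto
  also have "\<dots> = (\<Sum>l\<in>{1..d} - {i} - {k}. p)"
    using k no_loops uniform by (auto intro!: sum.cong)
  also have "card ({1..d} - {i} - {k}) = d - 2" using i k by (auto simp: card_Diff_subset)
  moreover have "d \<ge> 2" using i k by auto
  ultimately show ?thesis by (simp add: of_nat_diff)
qed

lemma taboo_prob_total_mass:
  assumes i: "i \<in> {1..d}" and j: "j \<in> {1..d} - {i}"
  shows "(\<Sum>k\<in>{1..d} - {i}. taboo_prob d P i n j k) = ((real d - 2) * p) ^ n"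
proof (induction n)
  case 0
  then show ?case using j by (simp add: sum.delta)
next
  case (Suc n)
  have "(\<Sum>l\<in>{1..d} - {i}. taboo_prob d P i (Suc n) j l)
      = (\<Sum>k\<in>{1..d} - {i}. taboo_prob d P i n j k * (\<Sum>l\<in>{1..d} - {i}. P k l))"
    by (simp add: sum_distrib_left) (rule sum.swap)
  also have "\<dots> = (\<Sum>k\<in>{1..d} - {i}. taboo_prob d P i n j k * ((real d - 2) * p))"
    using uniform_routing_sum_avoiding[OF i] by (auto intro!: sum.cong)
  also have "\<dots> = ((real d - 2) * p) ^ Suc n"
    using Suc by (simp add: sum_distrib_right[symmetric])
  finally show ?case .
qed

lemma taboo_prob_first_hit:
  assumes i: "i \<in> {1..d}" and j: "j \<in> {1..d} - {i}"
  shows "taboo_prob d P i (Suc n) j i = p * ((real d - 2) * p) ^ n"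
proof -
  have "taboo_prob d P i (Suc n) j i = (\<Sum>k\<in>{1..d} - {i}. taboo_prob d P i n j k * p)"
    using uniform i by (auto intro!: sum.cong)
  also have "\<dots> = p * ((real d - 2) * p) ^ n"
    using taboo_prob_total_mass[OF i j, of n] by (simp add: sum_distrib_left[symmetric] mult.commute)
  finally show ?thesis .
qed

lemma Qmat_uniform_routing:
  assumes detour: "\<bar>(real d - 2) * p\<bar> < 1"
    and "i \<in> {1..d}" "k \<in> {1..d}" "k \<noteq> i"
  shows "Qmat d P k i = p / (1 - (real d - 2) * p)"
proof -
  have "(\<lambda>n. p * ((real d - 2) * p) ^ n) sums (p * (1 / (1 - (real d - 2) * p)))"
    using detour by (intro sums_mult geometric_sums) simp
  hence "(\<lambda>n. taboo_prob d P i (Suc n) k i) sums (p / (1 - (real d - 2) * p))"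
    using taboo_prob_first_hit assms(2-4) by simp
  thus ?thesis using assms(4) by (simp add: Qmat_def sums_iff)
qed

end

lemma uniform_jackson_network_Qmat:
  assumes "d \<ge> 2" and "jackson_network d lam mu P"
    and uniform: "\<forall>i\<in>{1..d}. \<forall>j\<in>{1..d}. i \<noteq> j \<longrightarrow> P i j = p"
    and "p < 1 / (real d - 1)" and q: "q = p / (1 - (real d - 2) * p)"
  shows "\<forall>i\<in>{1..d}. \<forall>k\<in>{1..d}. k \<noteq> i \<longrightarrow> Qmat d P k i = q" and "0 \<le> q" and "q < 1"
proof -
  have no_loops: "\<forall>i\<in>{1..d}. P i i = 0" and "P 1 2 \<ge> 0"
    using assms(1,2) by (auto simp: jackson_network_def)
  hence "p \<ge> 0" using assms(1) uniform by auto
  moreover have "(real d - 1) * p < 1" using assms(1,4) by (simp add: field_simps)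
  ultimately have detour: "0 \<le> (real d - 2) * p" "(real d - 2) * p < 1 - p"
    using assms(1) by (simp, simp add: algebra_simps)
  show "\<forall>i\<in>{1..d}. \<forall>k\<in>{1..d}. k \<noteq> i \<longrightarrow> Qmat d P k i = q"
    using Qmat_uniform_routing[OF uniform no_loops] detour \<open>p \<ge> 0\<close> q by simp
  have "1 - (real d - 2) * p > 0" using detour \<open>p \<ge> 0\<close> by linarith
  thus "0 \<le> q" "q < 1" using \<open>p \<ge> 0\<close> detour(2) q by (simp_all add: pos_divide_less_eq)
qed

lemma dotd_gvec_uniform_Qmat:
  assumes Q: "\<forall>i\<in>{1..d}. \<forall>k\<in>{1..d}. k \<noteq> i \<longrightarrow> Qmat d P k i = q" and i: "i \<in> {1..d}"
  shows "dotd d (gvec d P gam i) v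
    = ln (1 + q * gam i) * sum v {1..d} + (ln (1 + gam i) - ln (1 + q * gam i)) * v i"
proof -
  have "dotd d (gvec d P gam i) v
      = (\<Sum>k\<in>{1..d}. ln (1 + q * gam i) * v k
          + (if k = i then (ln (1 + gam i) - ln (1 + q * gam i)) * v k else 0))"
    unfolding dotd_def gvec_def using Q i by (auto simp: Qmat_def algebra_simps intro!: sum.cong)
  also have "\<dots> = ln (1 + q * gam i) * sum v {1..d} + (ln (1 + gam i) - ln (1 + q * gam i)) * v i"
    using i by (simp add: sum.distrib sum_distrib_left)
  finally show ?thesis .
qed

definition argmax_within_support :: "nat set \<Rightarrow> (nat \<Rightarrow> (nat \<Rightarrow> real) \<Rightarrow> real) \<Rightarrow> bool" where
  "argmax_within_support D f \<longleftrightarrow>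
     (\<forall>i\<in>D. \<forall>v. (\<forall>k\<in>D. v k \<ge> 0) \<and> (\<exists>k\<in>D. v k \<noteq> 0) \<and> v i = 0 \<longrightarrow>
        f i v < Max ((\<lambda>j. f j v) ` D))"

lemma argmax_within_support_cong:
  "(\<And>j v. j \<in> D \<Longrightarrow> f j v = g j v) \<Longrightarrow> argmax_within_support D f \<longleftrightarrow> argmax_within_support D g"
  unfolding argmax_within_support_def by (simp cong: image_cong)

lemma argmax_within_support_imp_sum_lt_1:
  fixes a c :: "nat \<Rightarrow> real"
  assumes "finite D" "D \<noteq> {}" and c_pos: "\<forall>k\<in>D. c k > 0"
    and argmax: "argmax_within_support D (\<lambda>j v. a j * sum v D + c j * v j)"
  shows "(\<Sum>j\<in>D. (Max (a ` D) - a j) / c j) < 1"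
proof (rule ccontr)
  define A where "A = Max (a ` D)"
  define w where "w k = (A - a k) / c k" for k
  define S where "S = (\<Sum>k\<in>D. w k)"
  assume "\<not> ?thesis"
  hence S_ge_1: "S \<ge> 1" by (simp add: S_def w_def A_def)
  have A_ge: "a k \<le> A" if "k \<in> D" for k using that assms(1) by (simp add: A_def)
  have "A \<in> a ` D" using assms(1,2) by (simp add: A_def)
  then obtain i0 where i0: "i0 \<in> D" "a i0 = A" by auto
  have w_nonneg: "\<forall>k\<in>D. w k \<ge> 0" using A_ge c_pos by (auto simp: w_def intro!: divide_nonneg_pos)
  have "\<exists>k\<in>D. w k \<noteq> 0"
  proof (rule ccontr)
    assume "\<not> ?thesis"
    hence "S = 0" by (simp add: S_def)
    thus False using S_ge_1 by simp
  qed
  moreover have "w i0 = 0" using i0 by (simp add: w_def)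
  ultimately have "a i0 * S + c i0 * w i0 < Max ((\<lambda>j. a j * S + c j * w j) ` D)"
    using argmax i0(1) w_nonneg unfolding argmax_within_support_def S_def by blast
  moreover have "a k * S + c k * w k \<le> A * S" if "k \<in> D" for k
  proof -
    have "a k * S + c k * w k = a k * S + (A - a k)"
      using c_pos that by (simp add: w_def less_imp_neq[symmetric])
    moreover have "(A - a k) * (S - 1) \<ge> 0" using A_ge[OF that] S_ge_1 by simp
    ultimately show ?thesis by (simp add: algebra_simps)
  qed
  ultimately show False using assms(1,2) i0 \<open>w i0 = 0\<close> by (force simp: Max_gr_iff)
qed

lemma sum_lt_1_imp_argmax_within_support:
  fixes a c :: "nat \<Rightarrow> real"
  assumes "finite D" and c_pos: "\<forall>k\<in>D. c k > 0"
    and sum_lt_1: "(\<Sum>j\<in>D. (Max (a ` D) - a j) / c j) < 1"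
  shows "argmax_within_support D (\<lambda>j v. a j * sum v D + c j * v j)"
  unfolding argmax_within_support_def
proof (intro ballI allI impI)
  fix i and v :: "nat \<Rightarrow> real"
  assume i: "i \<in> D" and v: "(\<forall>k\<in>D. v k \<ge> 0) \<and> (\<exists>k\<in>D. v k \<noteq> 0) \<and> v i = 0"
  define A where "A = Max (a ` D)"
  define V where "V = sum v D"
  have A_ge: "a k \<le> A" if "k \<in> D" for k using that assms(1) by (simp add: A_def)
  have V_pos: "V > 0"
    using v assms(1) unfolding V_def by (metis less_eq_real_def sum_pos2)
  show "a i * sum v D + c i * v i < Max ((\<lambda>j. a j * sum v D + c j * v j) ` D)"
  proof (rule ccontr)
    assume "\<not> ?thesis"
    hence le: "a j * V + c j * v j \<le> a i * V" if "j \<in> D" for j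
      using Max_ge[OF finite_imageI[OF assms(1)] imageI[OF that], of "\<lambda>j. a j * V + c j * v j"] v
      by (simp add: V_def)
    have v_le: "v j \<le> V * ((A - a j) / c j)" if "j \<in> D" for j
    proof -
      have "a j * V + c j * v j \<le> A * V"
        using le[OF that] mult_right_mono[OF A_ge[OF i] less_imp_le[OF V_pos]] by linarith
      hence "c j * v j \<le> (A - a j) * V" by (simp add: left_diff_distrib)
      thus ?thesis using c_pos that by (simp add: field_simps)
    qed
    have "V \<le> (\<Sum>j\<in>D. V * ((A - a j) / c j))"
      unfolding V_def by (intro sum_mono) (use v_le in \<open>simp add: V_def\<close>)
    also have "\<dots> = V * (\<Sum>j\<in>D. (A - a j) / c j)" by (simp add: sum_distrib_left)
    also have "\<dots> < V" using sum_lt_1 V_pos by (simp add: A_def)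
    finally show False by simp
  qed
qed

lemma not_argmax_within_support_if_degenerate:
  fixes a c :: "nat \<Rightarrow> real"
  assumes "finite D" "j \<in> D" "D - {j} \<noteq> {}"
    and a_nonneg: "\<forall>k\<in>D. a k \<ge> 0" and "a j = 0" "c j = 0"
  shows "\<not> argmax_within_support D (\<lambda>j v. a j * sum v D + c j * v j)"
proof
  define e where "e k = (if k = j then 1 else (0::real))" for k
  define f where "f k = a k * sum e D + c k * e k" for k
  assume "argmax_within_support D (\<lambda>j v. a j * sum v D + c j * v j)"
  hence f_lt: "f i < Max (f ` D)" if "i \<in> D" "i \<noteq> j" for i
    using that assms(2) unfolding argmax_within_support_def f_def by (auto simp: e_def)
  have f_eq: "f k = (if k = j then 0 else a k)" for k
    using assms by (simp add: f_def e_def)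
  have "Max (a ` (D - {j})) \<in> a ` (D - {j})" using assms(1,3) by simp
  then obtain i where i: "i \<in> D - {j}" "a i = Max (a ` (D - {j}))"
    by (metis imageE)
  have "Max (f ` D) \<le> f i"
    using assms(1,2) i a_nonneg by (auto simp: f_eq)
  thus False using f_lt[of i] i by auto
qed

lemma Gamma_set_iff:
  "gam \<in> Gamma_set d P \<longleftrightarrow>
     (\<forall>i\<in>{1..d}. gam i \<ge> 0) \<and> argmax_within_support {1..d} (\<lambda>i. dotd d (gvec d P gam i))"
  by (simp add: Gamma_set_def argmax_within_support_def)

lemma Gamma_set_uniform_Qmat_iff:
  assumes Q: "\<forall>i\<in>{1..d}. \<forall>k\<in>{1..d}. k \<noteq> i \<longrightarrow> Qmat d P k i = q"
  shows "gam \<in> Gamma_set d P \<longleftrightarrow> (\<forall>j\<in>{1..d}. gam j \<ge> 0) \<and>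
    argmax_within_support {1..d}
      (\<lambda>j v. ln (1 + q * gam j) * sum v {1..d} + (ln (1 + gam j) - ln (1 + q * gam j)) * v j)"
  unfolding Gamma_set_iff
  by (intro conj_cong refl argmax_within_support_cong) (simp add: dotd_gvec_uniform_Qmat[OF Q])

lemma Gamma_set_uniform_Qmat_pos:
  assumes "d \<ge> 2" and Q: "\<forall>i\<in>{1..d}. \<forall>k\<in>{1..d}. k \<noteq> i \<longrightarrow> Qmat d P k i = q" and "0 \<le> q"
    and gam: "gam \<in> Gamma_set d P" and j: "j \<in> {1..d}"
  shows "gam j > 0"
proof (rule ccontr)
  assume "\<not> gam j > 0"
  moreover have "gam j \<ge> 0" using gam j by (simp add: Gamma_set_def)
  ultimately have "gam j = 0" by simp
  moreover have "(if j = 1 then 2 else 1) \<in> {1..d} - {j}" using assms(1) j by auto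
  hence "{1..d} - {j} \<noteq> {}" by blast
  moreover have "\<forall>k\<in>{1..d}. 0 \<le> ln (1 + q * gam k)"
    using gam \<open>0 \<le> q\<close> by (simp add: Gamma_set_def)
  ultimately show False
    using gam not_argmax_within_support_if_degenerate[OF finite_atLeastAtMost j, of
        "\<lambda>k. ln (1 + q * gam k)" "\<lambda>k. ln (1 + gam k) - ln (1 + q * gam k)"]
    by (simp add: Gamma_set_uniform_Qmat_iff[OF Q])
qed

theorem proposition3p3:
  fixes d :: nat and lam mu :: "nat \<Rightarrow> real" and P :: "nat \<Rightarrow> nat \<Rightarrow> real"
    and p q :: real and gam :: "nat \<Rightarrow> real"
  assumes "d \<ge> 2"
    and "jackson_network d lam mu P"
    and "hypA d lam mu P"
    and "hypB d lam mu P"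
    and "\<forall>i\<in>{1..d}. \<forall>j\<in>{1..d}. i \<noteq> j \<longrightarrow> P i j = p"
    and "p < 1 / (real d - 1)"
    and "q = p / (1 - (real d - 2) * p)"
  shows "gam \<in> Gamma_set d P \<longleftrightarrow> (\<forall>i\<in>{1..d}. gam i > 0) \<and> Sigma_fun d q gam < 1"
proof -
  define a where "a j = ln (1 + q * gam j)" for j
  define c where "c j = ln (1 + gam j) - ln (1 + q * gam j)" for j
  note Q = uniform_jackson_network_Qmat(1)[OF assms(1,2,5-7)]
  have q_bounds: "0 \<le> q" "q < 1" using uniform_jackson_network_Qmat(2,3)[OF assms(1,2,5-7)] .
  have Gamma_iff: "gam \<in> Gamma_set d P \<longleftrightarrow> (\<forall>j\<in>{1..d}. gam j \<ge> 0) \<and>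
      argmax_within_support {1..d} (\<lambda>j v. a j * sum v {1..d} + c j * v j)"
    unfolding a_def c_def by (rule Gamma_set_uniform_Qmat_iff[OF Q])
  have Sigma_eq: "Sigma_fun d q gam = (\<Sum>j\<in>{1..d}. (Max (a ` {1..d}) - a j) / c j)"
    by (simp add: Sigma_fun_def a_def c_def)
  have c_pos: "c j > 0" if "gam j > 0" for j
    using q_bounds that by (simp add: c_def add_pos_nonneg mult_less_cancel_right2 less_imp_le)
  show ?thesis
  proof
    assume gam: "gam \<in> Gamma_set d P"
    hence "\<forall>j\<in>{1..d}. gam j > 0"
      using Gamma_set_uniform_Qmat_pos[OF assms(1) Q q_bounds(1)] by blast
    thus "(\<forall>i\<in>{1..d}. gam i > 0) \<and> Sigma_fun d q gam < 1"
      using gam argmax_within_support_imp_sum_lt_1[of "{1..d}" c a] c_pos assms(1)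
      by (auto simp: Gamma_iff Sigma_eq)
  next
    assume "(\<forall>i\<in>{1..d}. gam i > 0) \<and> Sigma_fun d q gam < 1"
    thus "gam \<in> Gamma_set d P"
      using sum_lt_1_imp_argmax_within_support[of "{1..d}" c a] c_pos
      by (auto simp: Gamma_iff Sigma_eq less_imp_le)
  qed
qed

end
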